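(* Let $A$ be a finite abelian group of even order and $H$ a subgroup of $A$. If $H$ contains an element that is not a square in $A$, then $H$ is a subgroup perfect code of $A$.
   Context: $A$ is written additively with identity $0$. An element $x$ of $A$ is a square if $x=2y$ for some $y\in A$; a subset is square-free if it contains no squares. For a square-free $T\subseteq A$, the Cayley sum graph $\mathrm{CayS}(A,T)$ is the simple graph with vertex set $A$ in which distinct $x,y$ are adjacent iff $x+y\in T$. A subset $C$ of the vertex set of a graph is a perfect code if every vertex is at distance at most one from exactly one vertex of $C$. A subgroup $H$ of $A$ is a subgroup perfect code of $A$ if $H$ is a perfect code of $\mathrm{CayS}(A,T)$ for some square-free $T\subseteq A$ (the empty set allowed). *)

theory Defs
  imports Main
begin

text \<open>The abelian group A is the (finite) type 'a of class ab_group_add, written additively.\<close>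

definition is_square :: "'a::ab_group_add \<Rightarrow> bool" where
  "is_square x \<longleftrightarrow> (\<exists>y. x = y + y)"

definition square_free :: "'a::ab_group_add set \<Rightarrow> bool" where
  "square_free T \<longleftrightarrow> (\<forall>x\<in>T. \<not> is_square x)"

definition cays_adj :: "'a::ab_group_add set \<Rightarrow> 'a \<Rightarrow> 'a \<Rightarrow> bool" where
  "cays_adj T x y \<longleftrightarrow> x \<noteq> y \<and> x + y \<in> T"

definition perfect_code :: "('a \<Rightarrow> 'a \<Rightarrow> bool) \<Rightarrow> 'a set \<Rightarrow> 'a set \<Rightarrow> bool" where
  "perfect_code adj V C \<longleftrightarrow> C \<subseteq> V \<and> (\<forall>v\<in>V. \<exists>!c. c \<in> C \<and> (v = c \<or> adj v c))"

definition is_subgroup :: "'a::ab_group_add set \<Rightarrow> bool" where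
  "is_subgroup H \<longleftrightarrow> 0 \<in> H \<and> (\<forall>x\<in>H. \<forall>y\<in>H. x + y \<in> H) \<and> (\<forall>x\<in>H. - x \<in> H)"

definition subgroup_perfect_code :: "'a::ab_group_add set \<Rightarrow> bool" where
  "subgroup_perfect_code H \<longleftrightarrow> is_subgroup H \<and>
     (\<exists>T. square_free T \<and> perfect_code (cays_adj T) UNIV H)"

end

theory Submission
  imports Defs
begin

text \<open>Adding a non-square \<open>h \<in> H\<close> to a square gives a non-square, so every coset \<open>t + H\<close> contains
  a non-square (\<open>t\<close> or \<open>t + h\<close>). Pick one non-square in each coset other than \<open>H\<close> and let \<open>T\<close>
  be the set of these representatives. No \<open>v \<in> H\<close> has a neighbour in \<open>H\<close>, since \<open>H + H = H\<close>
  misses \<open>T\<close>; a vertex \<open>v \<notin> H\<close> has the unique neighbour \<open>s - v\<close> in \<open>H\<close>, where \<open>s\<close> is the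
  representative of \<open>v + H\<close>.\<close>

lemma is_subgroup_add: "is_subgroup H \<Longrightarrow> x \<in> H \<Longrightarrow> y \<in> H \<Longrightarrow> x + y \<in> H"
  unfolding is_subgroup_def by blast

lemma is_subgroup_diff: "is_subgroup H \<Longrightarrow> x \<in> H \<Longrightarrow> y \<in> H \<Longrightarrow> x - y \<in> H"
  unfolding is_subgroup_def by (metis diff_conv_add_uminus)

lemma not_square_add_square:
  assumes "\<not> is_square h" and "is_square t"
  shows "\<not> is_square (t + h)"
proof
  obtain y where y: "t = y + y" using assms(2) unfolding is_square_def by blast
  assume "is_square (t + h)"
  then obtain z where "t + h = z + z" unfolding is_square_def by blast
  then have "h = (z - y) + (z - y)" using y by (simp add: algebra_simps)
  then show False using assms(1) unfolding is_square_def by blast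
qed

lemma coset_contains_non_square:
  assumes "is_subgroup H" and "h \<in> H" and "\<not> is_square h"
  shows "\<exists>s. s - t \<in> H \<and> \<not> is_square s"
proof (cases "is_square t")
  case False
  then show ?thesis using assms(1) unfolding is_subgroup_def by (intro exI[of _ t]) simp
next
  case True
  then show ?thesis
    using assms not_square_add_square by (intro exI[of _ "t + h"]) simp
qed

lemma subgroup_transversal_within:
  assumes H: "is_subgroup H" and S: "\<And>t. \<exists>s\<in>S. s - t \<in> H"
  obtains T where "T \<subseteq> S" and "T \<inter> H = {}" and "\<And>v. v \<notin> H \<Longrightarrow> \<exists>!s. s \<in> T \<and> s - v \<in> H"
proof
  define rep where "rep t = (SOME s. s \<in> S \<and> s - t \<in> H)" for t
  have rep: "rep t \<in> S" "rep t - t \<in> H" for t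
    using someI_ex[of "\<lambda>s. s \<in> S \<and> s - t \<in> H"] S unfolding rep_def by auto
  have rep_coset: "rep t' = rep t" if "t' - t \<in> H" for t t'
  proof -
    have "s - t' \<in> H \<longleftrightarrow> s - t \<in> H" for s
      using is_subgroup_add[OF H _ that] is_subgroup_diff[OF H _ that]
      by (metis diff_add_cancel diff_add_eq_diff_diff_swap)
    then show ?thesis unfolding rep_def by simp
  qed
  define T where "T = rep ` (- H)"
  show "T \<subseteq> S" using rep(1) unfolding T_def by blast
  show "T \<inter> H = {}"
  proof -
    have "t \<in> H" if "rep t \<in> H" for t
      using is_subgroup_diff[OF H that rep(2)[of t]] by simp
    then show ?thesis unfolding T_def by blast
  qed
  show "\<exists>!s. s \<in> T \<and> s - v \<in> H" if "v \<notin> H" for v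
  proof (rule ex1I[of _ "rep v"])
    show "rep v \<in> T \<and> rep v - v \<in> H" using that rep(2) unfolding T_def by blast
    fix s assume "s \<in> T \<and> s - v \<in> H"
    then obtain t where s: "s = rep t" and "rep t - v \<in> H" unfolding T_def by blast
    moreover have "t - v = (rep t - v) - (rep t - t)" by simp
    ultimately have "t - v \<in> H" using is_subgroup_diff[OF H _ rep(2)[of t]] by metis
    then show "s = rep v" using s rep_coset by blast
  qed
qed

lemma subgroup_perfect_code_transversal:
  assumes H: "is_subgroup H" and disj: "T \<inter> H = {}"
    and unique: "\<And>v. v \<notin> H \<Longrightarrow> \<exists>!s. s \<in> T \<and> s - v \<in> H"
  shows "perfect_code (cays_adj T) UNIV H"
  unfolding perfect_code_def
proof (intro conjI ballI)
  fix v :: 'a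
  show "\<exists>!c. c \<in> H \<and> (v = c \<or> cays_adj T v c)"
  proof (cases "v \<in> H")
    case True
    then have "\<not> cays_adj T v c" if "c \<in> H" for c
      using is_subgroup_add[OF H True that] disj unfolding cays_adj_def by blast
    then show ?thesis using True by blast
  next
    case False
    then have nbr: "c \<in> H \<and> (v = c \<or> cays_adj T v c) \<longleftrightarrow> v + c \<in> T \<and> c \<in> H" for c
      unfolding cays_adj_def by auto
    obtain s where s: "s \<in> T" "s - v \<in> H" and s_unique: "\<And>s'. s' \<in> T \<and> s' - v \<in> H \<Longrightarrow> s' = s"
      using unique[OF False] by blast
    show ?thesis
    proof (rule ex1I[of _ "s - v"])
      show "s - v \<in> H \<and> (v = s - v \<or> cays_adj T v (s - v))"
        using nbr[of "s - v"] s by simp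
      fix c assume "c \<in> H \<and> (v = c \<or> cays_adj T v c)"
      then have "v + c = s" using nbr s_unique[of "v + c"] by simp
      then show "c = s - v" by (simp add: eq_diff_eq add.commute)
    qed
  qed
qed simp

theorem lemma3p4:
  fixes H :: "'a::{ab_group_add, finite} set"
  assumes "even (card (UNIV :: 'a set))"
    and "is_subgroup H"
    and "\<exists>h\<in>H. \<not> is_square h"
  shows "subgroup_perfect_code H"
proof -
  have "\<exists>s\<in>{s. \<not> is_square s}. s - t \<in> H" for t
    using coset_contains_non_square[OF assms(2)] assms(3) by blast
  then obtain T where T: "T \<subseteq> {s. \<not> is_square s}" and disj: "T \<inter> H = {}"
    and unique: "\<And>v. v \<notin> H \<Longrightarrow> \<exists>!s. s \<in> T \<and> s - v \<in> H"
    using subgroup_transversal_within[OF assms(2)] by blast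
  have "perfect_code (cays_adj T) UNIV H"
    using subgroup_perfect_code_transversal[OF assms(2) disj unique] .
  moreover have "square_free T" using T unfolding square_free_def by blast
  ultimately show ?thesis unfolding subgroup_perfect_code_def using assms(2) by blast
qed

end
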